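(* Consider the algorithm SCHEMATIC-ALGO$(G,\mu^*,m^*,\Delta^*,\gamma)$ described in the context. Suppose we are at the start of round $k$ for some $k\ge1$; let $H_k$ denote the current set $H$, and let $U_k$ be the set of edges in $E\setminus H_k$ that are underfull w.r.t. $H_k$. If $|U_k|\ge\mu^*\cdot(\Delta^* )^\gamma$, then with high probability the algorithm does not terminate at the end of round $k$ (i.e. it proceeds to round $k+1$).
   Context: Let $G=(V,E)$ be a graph with $n$ vertices, $m$ edges, average degree $d$; $\mu(G)$ is its maximum matching size. Fix a small constant $\epsilon\in(0,1)$ and $\beta:=1/\Theta(\epsilon^3)$. For $H\subseteq E$ and a pair $e=(u,v)$, $\deg_e(H):=\deg_u(H)+\deg_v(H)$. An edge $e$ is underfull w.r.t. $H$ if $\deg_e(H)<(1-\epsilon)\beta$ and overfull w.r.t. $H$ if $\deg_e(H)>\beta$. The parameters satisfy $\mu(G)/(2+\epsilon)\le\mu^*\le n$, $d\le\Delta^*\le n$, $m^*\ge m$, $0<\gamma<1$. SCHEMATIC-ALGO: set $H\leftarrow\emptyset$. Repeat rounds: in each round set Status $\leftarrow$ false; for $i=1,\dots,(100m^*\log n)/(\mu^*(\Delta^* )^\gamma)$, sample an edge $e\in E$ uniformly at random (independently, with repetition); if $e\in E\setminus H$ and $e$ is underfull w.r.t. $H$, then set Status $\leftarrow$ true, $H\leftarrow H\cup\{e\}$, and then while some edge of $H$ is overfull w.r.t. $H$, remove such an edge from $H$. If at the end of a round Status is false, stop the rounds (this is the last round). Then let $U$ be the set of edges of $E\setminus H$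 underfull w.r.t. $H$, take any $V_{small}\subseteq V$ with $\{v:\deg_v(U)\le (1-\epsilon)(\Delta^* )^\gamma/\epsilon\}\subseteq V_{small}\subseteq\{v:\deg_v(U)\le(1+\epsilon)(\Delta^* )^\gamma/\epsilon\}$, let $E_{small}:=\{(u,v)\in H\cup U: u,v\in V_{small}\}$, and return $\mu(E_{small})$. "With high probability" means with probability at least $1-1/\mathrm{poly}(n)$. *)

theory Defs
  imports Complex_Main
begin

definition graph :: "'a set \<Rightarrow> 'a set set \<Rightarrow> bool" where
  "graph V E \<longleftrightarrow> finite V \<and> (\<forall>e\<in>E. e \<subseteq> V \<and> card e = 2)"

definition deg :: "'a set set \<Rightarrow> 'a \<Rightarrow> nat" where
  "deg H v = card {e \<in> H. v \<in> e}"

definition edeg :: "'a set set \<Rightarrow> 'a set \<Rightarrow> nat" where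
  "edeg H e = (\<Sum>v\<in>e. deg H v)"

definition underfull :: "real \<Rightarrow> real \<Rightarrow> 'a set set \<Rightarrow> 'a set \<Rightarrow> bool" where
  "underfull eps beta H e \<longleftrightarrow> real (edeg H e) < (1 - eps) * beta"

definition overfull :: "real \<Rightarrow> 'a set set \<Rightarrow> 'a set \<Rightarrow> bool" where
  "overfull beta H e \<longleftrightarrow> real (edeg H e) > beta"

definition matching :: "'a set set \<Rightarrow> bool" where
  "matching M \<longleftrightarrow> (\<forall>e\<in>M. \<forall>f\<in>M. e \<noteq> f \<longrightarrow> e \<inter> f = {})"

definition max_matching :: "'a set set \<Rightarrow> nat" where
  "max_matching E = Max (card ` {M. M \<subseteq> E \<and> matching M})"

text \<open>The inner while-loop: repeatedly remove some overfull edge of H until none is left.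
  Any choice of the removed edge is allowed.\<close>
inductive cleanup :: "real \<Rightarrow> 'a set set \<Rightarrow> 'a set set \<Rightarrow> bool" for beta where
  cl_done: "(\<forall>e\<in>H. \<not> overfull beta H e) \<Longrightarrow> cleanup beta H H"
| cl_rem: "e \<in> H \<Longrightarrow> overfull beta H e \<Longrightarrow> cleanup beta (H - {e}) H' \<Longrightarrow> cleanup beta H H'"

inductive sample_step :: "real \<Rightarrow> real \<Rightarrow> 'a set set \<Rightarrow> bool \<Rightarrow> 'a set set \<Rightarrow> 'a set
    \<Rightarrow> bool \<Rightarrow> 'a set set \<Rightarrow> bool" for eps beta E where
  hit: "e \<in> E - H \<Longrightarrow> underfull eps beta H e \<Longrightarrow> cleanup beta (insert e H) H'
        \<Longrightarrow> sample_step eps beta E st H e True H'"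
| miss: "\<not> (e \<in> E - H \<and> underfull eps beta H e) \<Longrightarrow> sample_step eps beta E st H e st H"

inductive round_run :: "real \<Rightarrow> real \<Rightarrow> 'a set set \<Rightarrow> bool \<Rightarrow> 'a set set \<Rightarrow> 'a set list
    \<Rightarrow> bool \<Rightarrow> 'a set set \<Rightarrow> bool" for eps beta E where
  nil: "round_run eps beta E st H [] st H"
| cons: "sample_step eps beta E st H e st1 H1 \<Longrightarrow> round_run eps beta E st1 H1 es st' H'
         \<Longrightarrow> round_run eps beta E st H (e # es) st' H'"

definition num_samples :: "nat \<Rightarrow> real \<Rightarrow> real \<Rightarrow> real \<Rightarrow> real \<Rightarrow> nat" where
  "num_samples n mu_s m_s Delta_s gamma =
     nat \<lfloor>100 * m_s * ln (real n) / (mu_s * Delta_s powr gamma)\<rfloor>"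

text \<open>Possible values of H at the start of round k (k \<ge> 1): round 1 starts with the empty set;
  round k+1 is entered from the end of round k iff Status was set to true during round k.\<close>
inductive round_start :: "real \<Rightarrow> real \<Rightarrow> 'a set set \<Rightarrow> nat \<Rightarrow> nat \<Rightarrow> 'a set set \<Rightarrow> bool"
  for eps beta E T where
  rs_first: "round_start eps beta E T 1 {}"
| rs_next: "round_start eps beta E T k H \<Longrightarrow> set xs \<subseteq> E \<Longrightarrow> length xs = T
         \<Longrightarrow> round_run eps beta E False H xs True H' \<Longrightarrow> round_start eps beta E T (Suc k) H'"

text \<open>Sample sequences of a round: lists of length T over E (uniform, independent, with repetition).\<close>
definition sample_seqs :: "'a set set \<Rightarrow> nat \<Rightarrow> 'a set list set" where
  "sample_seqs E T = {xs. set xs \<subseteq> E \<and> length xs = T}"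

text \<open>Probability that, starting round with H, the algorithm proceeds to the next round
  (i.e. Status is true at the end of the round, for every resolution of the removal choices).\<close>
definition prob_proceed :: "real \<Rightarrow> real \<Rightarrow> 'a set set \<Rightarrow> nat \<Rightarrow> 'a set set \<Rightarrow> real" where
  "prob_proceed eps beta E T H =
     real (card {xs \<in> sample_seqs E T. \<forall>st' H'. round_run eps beta E False H xs st' H' \<longrightarrow> st'})
     / real (card E) ^ T"

end

theory Submission
  imports Defs
begin

text \<open>A round ends with Status false only if no sample was accepted; then H never changed,
  so every sample avoided the set U of underfull edges of E - H. Among the m^T sample sequences
  at most (m - |U|)^T do so, hence the round fails with probability at most
  (1 - |U|/m)^T \<le> exp (- T |U| / m). With |U| \<ge> mu* (Delta*)^gamma and m \<le> m*, the number T of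
  samples gives T |U| / m \<ge> 100 ln n - 1, so the failure probability is at most e n^-100 \<le> 1/n.\<close>

lemma round_run_status_persists:
  "round_run eps beta E st H xs st' H' \<Longrightarrow> st \<Longrightarrow> st'"
proof (induction rule: round_run.induct)
  case (cons st H e st1 H1 es st' H')
  from cons.hyps(1) cons.prems have st1
    by (cases rule: sample_step.cases) auto
  then show ?case by (rule cons.IH)
qed

lemma round_run_unset_status_avoids_underfull:
  "round_run eps beta E st H xs st' H' \<Longrightarrow> \<not> st' \<Longrightarrow>
     set xs \<inter> {e \<in> E - H. underfull eps beta H e} = {}"
proof (induction rule: round_run.induct)
  case (cons st H e st1 H1 es st' H')
  have "\<not> st1" using round_run_status_persists[OF cons.hyps(2)] cons.prems by blast
  with cons.hyps(1) have "H1 = H" and "\<not> (e \<in> E - H \<and> underfull eps beta H e)"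
    by (cases rule: sample_step.cases; auto)+
  with cons.IH cons.prems show ?case by auto
qed simp

lemma card_lists_meeting:
  assumes "finite A" "B \<subseteq> A"
  shows "card {xs. set xs \<subseteq> A \<and> length xs = n \<and> set xs \<inter> B \<noteq> {}}
           = card A ^ n - card (A - B) ^ n"
proof -
  have "{xs. set xs \<subseteq> A \<and> length xs = n \<and> set xs \<inter> B \<noteq> {}}
          = {xs. set xs \<subseteq> A \<and> length xs = n} - {xs. set xs \<subseteq> A - B \<and> length xs = n}"
    by auto
  moreover have "{xs. set xs \<subseteq> A - B \<and> length xs = n} \<subseteq> {xs. set xs \<subseteq> A \<and> length xs = n}"
    by auto
  ultimately show ?thesis
    using assms by (simp add: card_Diff_subset finite_lists_length_eq card_lists_length_eq)
qed

lemma prob_proceed_ge_1_minus_miss_power: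
  fixes eps beta :: real and H :: "'a set set"
  assumes "finite E" "E \<noteq> {}"
  defines "U \<equiv> {e \<in> E - H. underfull eps beta H e}"
  shows "1 - (1 - real (card U) / real (card E)) ^ T \<le> prob_proceed eps beta E T H"
proof -
  let ?Meet = "{xs. set xs \<subseteq> E \<and> length xs = T \<and> set xs \<inter> U \<noteq> {}}"
  let ?Good = "{xs \<in> sample_seqs E T. \<forall>st' H'. round_run eps beta E False H xs st' H' \<longrightarrow> st'}"
  have "?Meet \<subseteq> ?Good"
    using round_run_unset_status_avoids_underfull unfolding sample_seqs_def U_def by blast
  moreover have "finite (sample_seqs E T)"
    using assms(1) unfolding sample_seqs_def by (simp add: finite_lists_length_eq)
  then have "finite ?Good" by simp
  ultimately have "card ?Meet \<le> card ?Good" by (rule card_mono[rotated])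
  have "card U \<le> card E" and "card (E - U) = card E - card U"
    using assms(1) by (auto simp: U_def card_Diff_subset card_mono finite_subset)
  then have "real (card ?Meet) = real (card E) ^ T - real (card E - card U) ^ T"
    using card_lists_meeting[OF assms(1), of U T] by (auto simp: U_def of_nat_diff power_mono)
  with \<open>card ?Meet \<le> card ?Good\<close>
  have "(real (card E) ^ T - real (card E - card U) ^ T) / real (card E) ^ T
          \<le> prob_proceed eps beta E T H"
    unfolding prob_proceed_def by (simp add: divide_right_mono)
  moreover have "1 - real (card U) / real (card E) = real (card E - card U) / real (card E)"
    using \<open>card U \<le> card E\<close> assms by (simp add: of_nat_diff field_simps)
  ultimately show ?thesis
    using assms by (simp add: power_divide diff_divide_distrib)
qed

lemma one_minus_power_le_exp:
  fixes t :: real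
  assumes "t \<le> 1"
  shows "(1 - t) ^ n \<le> exp (- (real n * t))"
proof -
  have "(1 - t) ^ n \<le> exp (- t) ^ n"
    using assms exp_ge_add_one_self[of "- t"] by (intro power_mono) auto
  also have "\<dots> = exp (- (real n * t))"
    by (simp add: exp_of_nat_mult[symmetric])
  finally show ?thesis .
qed

lemma exp_one_minus_100_ln_le_inverse:
  fixes x :: real
  assumes "2 \<le> x"
  shows "exp (1 - 100 * ln x) \<le> 1 / x"
proof -
  have "exp (1::real) \<le> 3" using exp_le by simp
  also have "(3::real) \<le> x ^ 99"
    using power_mono[OF assms, of 99] by simp
  finally have "exp 1 / x ^ 99 / x \<le> 1 / x"
    using assms by (intro divide_right_mono) auto
  moreover have "exp (1 - 100 * ln x) = exp 1 / x ^ 99 / x"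
    using assms by (simp add: exp_diff exp_of_nat_mult[of 100, simplified] power_Suc2[symmetric])
  ultimately show ?thesis by simp
qed

lemma num_samples_times_hit_rate:
  fixes u m :: real
  assumes "0 < mu_s * Delta_s powr gamma" "mu_s * Delta_s powr gamma \<le> u"
    and "u \<le> m" "m \<le> m_s" "1 \<le> n"
  shows "100 * ln (real n) - 1 \<le> real (num_samples n mu_s m_s Delta_s gamma) * (u / m)"
proof -
  define D where "D = mu_s * Delta_s powr gamma"
  define x where "x = 100 * m_s * ln (real n) / D"
  have "0 < D" "D \<le> u" "0 < m" "0 \<le> ln (real n)"
    using assms unfolding D_def by auto
  then have "0 \<le> x" using assms unfolding x_def by simp
  then have "x - 1 \<le> real (num_samples n mu_s m_s Delta_s gamma)"
    unfolding num_samples_def D_def[symmetric] x_def[symmetric] by linarith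
  then have "(x - 1) * (u / m) \<le> real (num_samples n mu_s m_s Delta_s gamma) * (u / m)"
    using \<open>D \<le> u\<close> \<open>0 < D\<close> \<open>0 < m\<close> by (intro mult_right_mono) auto
  moreover have "u / m \<le> 1" using assms \<open>0 < m\<close> by simp
  moreover have "1 \<le> (m_s / m) * (u / D)"
    using assms \<open>0 < m\<close> \<open>0 < D\<close> \<open>D \<le> u\<close> by (intro mult_ge1_I) auto
  then have "100 * ln (real n) * 1 \<le> 100 * ln (real n) * ((m_s / m) * (u / D))"
    using \<open>0 \<le> ln (real n)\<close> by (intro mult_left_mono) auto
  then have "100 * ln (real n) \<le> x * (u / m)"
    unfolding x_def using \<open>0 < m\<close> \<open>0 < D\<close> by (simp add: field_simps)
  moreover have "(x - 1) * (u / m) = x * (u / m) - u / m"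
    by (simp only: left_diff_distrib mult_1)
  ultimately show ?thesis by linarith
qed

lemma graph_card_vertices_ge_2:
  assumes "graph V E" "e \<in> E"
  shows "2 \<le> card V"
  using assms card_mono[of V e] unfolding graph_def by auto

lemma prob_proceed_num_samples_ge_1_minus_inverse:
  assumes "graph V E" "0 < mu_s * Delta_s powr gamma" "real (card E) \<le> m_s"
    and "mu_s * Delta_s powr gamma \<le> real (card {e \<in> E - H. underfull eps beta H e})"
  shows "1 - 1 / real (card V)
           \<le> prob_proceed eps beta E (num_samples (card V) mu_s m_s Delta_s gamma) H"
proof -
  define U where "U = {e \<in> E - H. underfull eps beta H e}"
  define T where "T = num_samples (card V) mu_s m_s Delta_s gamma"
  have "finite E"
    using assms(1) unfolding graph_def by (meson Pow_iff finite_Pow_iff finite_subset subsetI)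
  have "card U \<le> card E"
    using \<open>finite E\<close> by (auto simp: U_def intro: card_mono)
  have "0 < card U"
    using assms(2,4) unfolding U_def by linarith
  then obtain e where "e \<in> U" by fastforce
  then have "E \<noteq> {}" and "2 \<le> card V"
    using graph_card_vertices_ge_2[OF assms(1)] by (auto simp: U_def)
  have "100 * ln (card V) - 1 \<le> real T * (card U / card E)"
    using assms(2-4) \<open>card U \<le> card E\<close> \<open>2 \<le> card V\<close> unfolding T_def U_def
    by (intro num_samples_times_hit_rate) auto
  have "(1 - card U / card E) ^ T \<le> exp (- (real T * (card U / card E)))"
    using \<open>card U \<le> card E\<close> by (intro one_minus_power_le_exp) (auto simp: divide_le_eq_1)
  also have "\<dots> \<le> exp (1 - 100 * ln (card V))"
    using \<open>100 * ln (card V) - 1 \<le> _\<close> by simp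
  also have "\<dots> \<le> 1 / card V"
    using \<open>2 \<le> card V\<close> by (intro exp_one_minus_100_ln_le_inverse) simp
  finally have "(1 - card U / card E) ^ T \<le> 1 / card V" .
  moreover have "1 - (1 - card U / card E) ^ T \<le> prob_proceed eps beta E T H"
    unfolding U_def using \<open>finite E\<close> \<open>E \<noteq> {}\<close> by (rule prob_proceed_ge_1_minus_miss_power)
  ultimately show ?thesis
    unfolding T_def by linarith
qed

theorem lemma3p2:
  fixes eps beta :: real
  assumes "0 < eps" "eps < 1" "0 < beta"
  shows "\<exists>c>0. \<forall>(V :: 'a set) E mu_s m_s Delta_s gamma k H.
     graph V E \<and>
     real (max_matching E) / (2 + eps) \<le> mu_s \<and> mu_s \<le> real (card V) \<and> 0 < mu_s \<and>
     2 * real (card E) / real (card V) \<le> Delta_s \<and> Delta_s \<le> real (card V) \<and> 0 < Delta_s \<and>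
     real (card E) \<le> m_s \<and> 0 < gamma \<and> gamma < 1 \<and>
     1 \<le> k \<and>
     round_start eps beta E (num_samples (card V) mu_s m_s Delta_s gamma) k H \<and>
     real (card {e \<in> E - H. underfull eps beta H e}) \<ge> mu_s * Delta_s powr gamma
     \<longrightarrow> prob_proceed eps beta E (num_samples (card V) mu_s m_s Delta_s gamma) H
           \<ge> 1 - 1 / real (card V) powr c"
proof (intro exI[of _ 1] conjI allI impI)
  \<comment> \<open>The bound holds for every H.\<close>
  fix V :: "'a set" and E mu_s m_s Delta_s gamma k H
  assume hyps: "graph V E \<and>
     real (max_matching E) / (2 + eps) \<le> mu_s \<and> mu_s \<le> real (card V) \<and> 0 < mu_s \<and>
     2 * real (card E) / real (card V) \<le> Delta_s \<and> Delta_s \<le> real (card V) \<and> 0 < Delta_s \<and>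
     real (card E) \<le> m_s \<and> 0 < gamma \<and> gamma < 1 \<and>
     1 \<le> k \<and>
     round_start eps beta E (num_samples (card V) mu_s m_s Delta_s gamma) k H \<and>
     real (card {e \<in> E - H. underfull eps beta H e}) \<ge> mu_s * Delta_s powr gamma"
  then have "1 - 1 / real (card V)
               \<le> prob_proceed eps beta E (num_samples (card V) mu_s m_s Delta_s gamma) H"
    by (intro prob_proceed_num_samples_ge_1_minus_inverse) auto
  then show "1 - 1 / real (card V) powr 1
               \<le> prob_proceed eps beta E (num_samples (card V) mu_s m_s Delta_s gamma) H"
    by simp
qed simp

end
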